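(* Let $G$ be a connected graph of order $n$. Then $\overline{\mathrm{lcs}}(G)=n-1$ if and only if $G$ has a vertex $v$ for which $\chi(G\setminus v)=\chi(G)-1=\deg(v)$.
   Context: All graphs are finite and simple. For a graph $G=(V,E)$ and an integer $k\ge\chi(G)$, a proper $k$-colouring is a map $c:V\to[k]$ with $c(u)\neq c(v)$ for every edge $uv$. A set $S\subseteq V$ is a determining set for $(G,c)$ if there is no proper $k$-colouring $c'\neq c$ of $G$ with $c'(s)=c(s)$ for all $s\in S$. A critical set for $(G,c)$ is an inclusion-minimal determining set. $\mathrm{lcs}(G,c)$ denotes the size of a largest critical set for $(G,c)$, and $\overline{\mathrm{lcs}}(G,k)$ is the maximum of $\mathrm{lcs}(G,c)$ over all proper $k$-colourings $c$ of $G$; $\overline{\mathrm{lcs}}(G)=\overline{\mathrm{lcs}}(G,\chi(G))$. $G\setminus v$ denotes $G$ with vertex $v$ deleted. *)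

theory Defs
  imports Main
begin

definition simple_graph :: "'a set \<Rightarrow> ('a \<Rightarrow> 'a \<Rightarrow> bool) \<Rightarrow> bool" where
  "simple_graph V E \<longleftrightarrow> finite V \<and> (\<forall>u v. E u v \<longrightarrow> u \<in> V \<and> v \<in> V)
     \<and> (\<forall>u v. E u v \<longrightarrow> E v u) \<and> (\<forall>v. \<not> E v v)"

definition connected_graph :: "'a set \<Rightarrow> ('a \<Rightarrow> 'a \<Rightarrow> bool) \<Rightarrow> bool" where
  "connected_graph V E \<longleftrightarrow> V \<noteq> {} \<and> (\<forall>u\<in>V. \<forall>v\<in>V. E\<^sup>*\<^sup>* u v)"

definition degree :: "'a set \<Rightarrow> ('a \<Rightarrow> 'a \<Rightarrow> bool) \<Rightarrow> 'a \<Rightarrow> nat" where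
  "degree V E v = card {u \<in> V. E v u}"

definition del_vertex_V :: "'a set \<Rightarrow> 'a \<Rightarrow> 'a set" where
  "del_vertex_V V v = V - {v}"

definition del_vertex_E :: "('a \<Rightarrow> 'a \<Rightarrow> bool) \<Rightarrow> 'a \<Rightarrow> 'a \<Rightarrow> 'a \<Rightarrow> bool" where
  "del_vertex_E E v = (\<lambda>x y. E x y \<and> x \<noteq> v \<and> y \<noteq> v)"

definition proper_colouring :: "'a set \<Rightarrow> ('a \<Rightarrow> 'a \<Rightarrow> bool) \<Rightarrow> nat \<Rightarrow> ('a \<Rightarrow> nat) \<Rightarrow> bool" where
  "proper_colouring V E k c \<longleftrightarrow> (\<forall>v\<in>V. c v < k) \<and> (\<forall>u\<in>V. \<forall>v\<in>V. E u v \<longrightarrow> c u \<noteq> c v)"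

definition chromatic_number :: "'a set \<Rightarrow> ('a \<Rightarrow> 'a \<Rightarrow> bool) \<Rightarrow> nat" where
  "chromatic_number V E = (LEAST k. \<exists>c. proper_colouring V E k c)"

definition determining_set ::
  "'a set \<Rightarrow> ('a \<Rightarrow> 'a \<Rightarrow> bool) \<Rightarrow> nat \<Rightarrow> ('a \<Rightarrow> nat) \<Rightarrow> 'a set \<Rightarrow> bool" where
  "determining_set V E k c S \<longleftrightarrow> S \<subseteq> V \<and>
     \<not> (\<exists>c'. proper_colouring V E k c' \<and> (\<exists>v\<in>V. c' v \<noteq> c v) \<and> (\<forall>s\<in>S. c' s = c s))"

definition critical_set ::
  "'a set \<Rightarrow> ('a \<Rightarrow> 'a \<Rightarrow> bool) \<Rightarrow> nat \<Rightarrow> ('a \<Rightarrow> nat) \<Rightarrow> 'a set \<Rightarrow> bool" where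
  "critical_set V E k c S \<longleftrightarrow> determining_set V E k c S \<and>
     (\<forall>T. T \<subset> S \<longrightarrow> \<not> determining_set V E k c T)"

definition lcs :: "'a set \<Rightarrow> ('a \<Rightarrow> 'a \<Rightarrow> bool) \<Rightarrow> nat \<Rightarrow> ('a \<Rightarrow> nat) \<Rightarrow> nat" where
  "lcs V E k c = Max {card S | S. critical_set V E k c S}"

definition lcs_bar_k :: "'a set \<Rightarrow> ('a \<Rightarrow> 'a \<Rightarrow> bool) \<Rightarrow> nat \<Rightarrow> nat" where
  "lcs_bar_k V E k = Max {lcs V E k c | c. proper_colouring V E k c}"

definition lcs_bar :: "'a set \<Rightarrow> ('a \<Rightarrow> 'a \<Rightarrow> bool) \<Rightarrow> nat" where
  "lcs_bar V E = lcs_bar_k V E (chromatic_number V E)"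

end

theory Submission
  imports Defs
begin

text \<open>
  Call a vertex x recolourable in c if changing the colour of x alone yields another proper
  colouring; this is exactly the case in which V - {x} is not determining. In a
  \<open>\<chi>\<close>-colouring every colour class contains a vertex that is not recolourable, for otherwise
  the class could be emptied, saving a colour. Hence V itself is never critical, so
  \<open>lcs(G, c) \<le> n - 1\<close>, and a critical set of size n - 1 has the form V - {v}.

  If V - {v} is critical, then v sees every colour other than its own. For such a colour, a
  non-recolourable vertex u of that class is the only neighbour of v of that colour, because a
  colouring witnessing that V - {v, u} is not determining must move v onto the colour of u.
  So \<open>deg v = \<chi> - 1\<close>, and the non-neighbours of v sharing its colour are recolourable, so
  that this class can be emptied in G - v.
  Conversely, colour G - v with \<open>\<chi> - 1\<close> colours and give v a new colour. Then v sees every old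
  colour exactly once, and swapping the colours of v and a neighbour, or giving a non-neighbour
  the new colour, shows that no proper subset of V - {v} is determining.
\<close>

lemma simple_graph_del_vertex:
  "simple_graph V E \<Longrightarrow> simple_graph (del_vertex_V V v) (del_vertex_E E v)"
  unfolding simple_graph_def del_vertex_V_def del_vertex_E_def by auto

lemma proper_colouring_del_vertex:
  "proper_colouring V E k c \<Longrightarrow> proper_colouring (del_vertex_V V v) (del_vertex_E E v) k c"
  unfolding proper_colouring_def del_vertex_V_def del_vertex_E_def by auto

lemma proper_colouring_extend_del_vertex:
  assumes "simple_graph V E" and "proper_colouring (del_vertex_V V v) (del_vertex_E E v) k c"
  shows "proper_colouring V E (Suc k) (c(v := k))"
  using assms unfolding simple_graph_def proper_colouring_def del_vertex_V_def del_vertex_E_def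
  by (metis Diff_iff fun_upd_apply less_Suc_eq nat_neq_iff singletonD)

lemma proper_colouring_cong:
  "proper_colouring V E k c \<Longrightarrow> (\<And>x. x \<in> V \<Longrightarrow> c' x = c x) \<Longrightarrow> proper_colouring V E k c'"
  unfolding proper_colouring_def by auto

lemma proper_colouring_fun_upd_iff:
  assumes "simple_graph V E" and "proper_colouring V E k c" and "v \<in> V"
  shows "proper_colouring V E k (c(v := b)) \<longleftrightarrow> b < k \<and> (\<forall>u\<in>V. E v u \<longrightarrow> c u \<noteq> b)"
  using assms unfolding simple_graph_def proper_colouring_def
  by (smt (verit, best) fun_upd_apply)

lemma proper_colouring_swap:
  assumes "simple_graph V E" and "proper_colouring V E k c" and "u \<in> V" and "v \<in> V" and "E u v"
    and "\<forall>w\<in>V. E u w \<longrightarrow> w \<noteq> v \<longrightarrow> c w \<noteq> c v"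
    and "\<forall>w\<in>V. E v w \<longrightarrow> w \<noteq> u \<longrightarrow> c w \<noteq> c u"
  shows "proper_colouring V E k (c(u := c v, v := c u))"
  using assms unfolding simple_graph_def proper_colouring_def
  by (smt (verit, best) fun_upd_apply)

lemma chromatic_number_le: "proper_colouring V E k c \<Longrightarrow> chromatic_number V E \<le> k"
  unfolding chromatic_number_def by (rule Least_le) blast

lemma proper_colouring_chromatic_number:
  assumes "simple_graph V E"
  obtains c where "proper_colouring V E (chromatic_number V E) c"
proof -
  have irrefl: "\<not> E x x" for x using assms unfolding simple_graph_def by blast
  have "finite V" using assms unfolding simple_graph_def by blast
  then obtain h where h: "bij_betw h V {0..<card V}"
    using ex_bij_betw_finite_nat by blast
  have "proper_colouring V E (card V) h"
    unfolding proper_colouring_def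
  proof (intro conjI ballI impI)
    show "h x < card V" if "x \<in> V" for x
      using h that bij_betwE by fastforce
    show "h x \<noteq> h y" if "x \<in> V" "y \<in> V" "E x y" for x y
      using h that irrefl bij_betw_imp_inj_on inj_onD by metis
  qed
  then show thesis
    using that LeastI_ex[of "\<lambda>k. \<exists>c. proper_colouring V E k c"] unfolding chromatic_number_def by blast
qed

lemma chromatic_number_pos:
  assumes "simple_graph V E" and "V \<noteq> {}"
  shows "0 < chromatic_number V E"
  using proper_colouring_chromatic_number[OF assms(1)] assms(2) unfolding proper_colouring_def
  by (metis all_not_in_conv not_less_zero gr_zeroI)

lemma chromatic_number_le_del_vertex:
  assumes "simple_graph V E"
  shows "chromatic_number V E \<le> Suc (chromatic_number (del_vertex_V V v) (del_vertex_E E v))"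
  using proper_colouring_chromatic_number[OF simple_graph_del_vertex[OF assms]]
  by (metis assms chromatic_number_le proper_colouring_extend_del_vertex)

definition recolourable :: "'a set \<Rightarrow> ('a \<Rightarrow> 'a \<Rightarrow> bool) \<Rightarrow> nat \<Rightarrow> ('a \<Rightarrow> nat) \<Rightarrow> 'a \<Rightarrow> bool" where
  "recolourable V E k c x \<longleftrightarrow> (\<exists>b. b \<noteq> c x \<and> proper_colouring V E k (c(x := b)))"

lemma recolourable_iff:
  assumes "simple_graph V E" and "proper_colouring V E k c" and "x \<in> V"
  shows "recolourable V E k c x \<longleftrightarrow> (\<exists>b<k. b \<noteq> c x \<and> (\<forall>u\<in>V. E x u \<longrightarrow> c u \<noteq> b))"
  unfolding recolourable_def proper_colouring_fun_upd_iff[OF assms] by blast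

lemma recolourable_del_vertex:
  assumes "recolourable V E k c x"
  shows "recolourable (del_vertex_V V v) (del_vertex_E E v) k c x"
proof -
  obtain b where "b \<noteq> c x" and "proper_colouring V E k (c(x := b))"
    using assms unfolding recolourable_def by blast
  then show ?thesis
    unfolding recolourable_def by (intro exI[of _ b] conjI proper_colouring_del_vertex)
qed

lemma determining_set_Diff_singleton_iff:
  assumes "x \<in> V"
  shows "determining_set V E k c (V - {x}) \<longleftrightarrow> \<not> recolourable V E k c x"
proof
  assume "determining_set V E k c (V - {x})"
  then show "\<not> recolourable V E k c x"
    using assms unfolding determining_set_def recolourable_def
    by (metis DiffD2 fun_upd_other fun_upd_same singletonI)
next
  assume not_recolourable: "\<not> recolourable V E k c x"
  show "determining_set V E k c (V - {x})"
    unfolding determining_set_def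
  proof (intro conjI notI)
    assume "\<exists>c'. proper_colouring V E k c' \<and> (\<exists>v\<in>V. c' v \<noteq> c v) \<and> (\<forall>s\<in>V - {x}. c' s = c s)"
    then obtain c' where c': "proper_colouring V E k c'" "\<exists>v\<in>V. c' v \<noteq> c v"
      and agree: "\<forall>s\<in>V - {x}. c' s = c s"
      by blast
    have "c' x \<noteq> c x" using c'(2) agree by blast
    moreover have "proper_colouring V E k (c(x := c' x))"
      using c'(1) by (rule proper_colouring_cong) (use agree in auto)
    ultimately show False
      using not_recolourable unfolding recolourable_def by blast
  qed blast
qed

lemma proper_colouring_skip_colour:
  assumes "proper_colouring V E k c" and "b < k" and "\<forall>x\<in>V. c x \<noteq> b"
  shows "proper_colouring V E (k - 1) (\<lambda>x. if b < c x then c x - 1 else c x)"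
  using assms unfolding proper_colouring_def by (auto simp: eq_diff_iff)

lemma proper_colouring_remove_colour:
  assumes "simple_graph V E" and c: "proper_colouring V E k c" and "b < k"
    and recolourable: "\<forall>x\<in>V. c x = b \<longrightarrow> recolourable V E k c x"
  obtains c' where "proper_colouring V E (k - 1) c'"
proof -
  have "\<exists>d<k. d \<noteq> b \<and> (\<forall>u\<in>V. E x u \<longrightarrow> c u \<noteq> d)" if "x \<in> V" "c x = b" for x
    using recolourable recolourable_iff[OF assms(1,2)] that by metis
  then obtain D where D: "\<And>x. x \<in> V \<Longrightarrow> c x = b \<Longrightarrow> D x < k \<and> D x \<noteq> b \<and> (\<forall>u\<in>V. E x u \<longrightarrow> c u \<noteq> D x)"
    by metis
  define c2 where "c2 x = (if c x = b then D x else c x)" for x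
  \<comment> \<open>The colour class of b is independent, so all its vertices can be recoloured at once.\<close>
  have "proper_colouring V E k c2"
    unfolding proper_colouring_def
  proof (intro conjI ballI impI)
    show "c2 x < k" if "x \<in> V" for x
      using c D that unfolding c2_def proper_colouring_def by auto
    show "c2 x \<noteq> c2 y" if "x \<in> V" "y \<in> V" "E x y" for x y
    proof -
      have "E y x" "c x \<noteq> c y" using assms(1) c that unfolding simple_graph_def proper_colouring_def by auto
      then show ?thesis using D[of x] D[of y] that unfolding c2_def by auto
    qed
  qed
  moreover have "\<forall>x\<in>V. c2 x \<noteq> b"
    using D unfolding c2_def by auto
  ultimately show thesis
    using that proper_colouring_skip_colour \<open>b < k\<close> by blast
qed

lemma chromatic_colouring_not_recolourable:
  assumes "simple_graph V E" and c: "proper_colouring V E (chromatic_number V E) c"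
    and "b < chromatic_number V E"
  obtains x where "x \<in> V" "c x = b" "\<not> recolourable V E (chromatic_number V E) c x"
proof -
  have "\<not> (\<forall>x\<in>V. c x = b \<longrightarrow> recolourable V E (chromatic_number V E) c x)"
  proof
    assume "\<forall>x\<in>V. c x = b \<longrightarrow> recolourable V E (chromatic_number V E) c x"
    then obtain c' where "proper_colouring V E (chromatic_number V E - 1) c'"
      by (rule proper_colouring_remove_colour[OF assms])
    then have "chromatic_number V E \<le> chromatic_number V E - 1"
      by (rule chromatic_number_le)
    then show False using assms(3) by linarith
  qed
  then show thesis using that by blast
qed

lemma determining_set_mono:
  "determining_set V E k c S \<Longrightarrow> S \<subseteq> T \<Longrightarrow> T \<subseteq> V \<Longrightarrow> determining_set V E k c T"
  unfolding determining_set_def by blast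

lemma critical_set_iff_Diff_singleton:
  "critical_set V E k c S \<longleftrightarrow>
     determining_set V E k c S \<and> (\<forall>u\<in>S. \<not> determining_set V E k c (S - {u}))"
proof
  assume "critical_set V E k c S"
  then show "determining_set V E k c S \<and> (\<forall>u\<in>S. \<not> determining_set V E k c (S - {u}))"
    unfolding critical_set_def by blast
next
  assume S: "determining_set V E k c S \<and> (\<forall>u\<in>S. \<not> determining_set V E k c (S - {u}))"
  have "\<not> determining_set V E k c T" if "T \<subset> S" for T
  proof
    assume "determining_set V E k c T"
    obtain u where "u \<in> S" "T \<subseteq> S - {u}" using \<open>T \<subset> S\<close> by blast
    moreover have "S \<subseteq> V" using S unfolding determining_set_def by blast
    ultimately show False
      using S determining_set_mono[OF \<open>determining_set V E k c T\<close>] by blast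
  qed
  then show "critical_set V E k c S"
    using S unfolding critical_set_def by blast
qed

lemma critical_set_exists:
  assumes "finite V"
  obtains S where "critical_set V E k c S"
proof -
  have "determining_set V E k c V" unfolding determining_set_def by auto
  then obtain S where S: "determining_set V E k c S"
    and least: "\<And>T. determining_set V E k c T \<Longrightarrow> card S \<le> card T"
    using ex_has_least_nat[of "determining_set V E k c" V card] by blast
  have "finite S" using S assms finite_subset unfolding determining_set_def by blast
  then have "critical_set V E k c S"
    unfolding critical_set_def using S least psubset_card_mono by (meson leD)
  then show thesis by (rule that)
qed

lemma lcs_bar_k_eq_iff:
  assumes "finite V" and "\<exists>c. proper_colouring V E k c"
    and bound: "\<And>c S. proper_colouring V E k c \<Longrightarrow> critical_set V E k c S \<Longrightarrow> card S \<le> m"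
  shows "lcs_bar_k V E k = m \<longleftrightarrow>
    (\<exists>c S. proper_colouring V E k c \<and> critical_set V E k c S \<and> card S = m)"
proof -
  define sizes where "sizes c = {card S | S. critical_set V E k c S}" for c
  have sizes: "finite (sizes c)" "sizes c \<noteq> {}" "\<forall>s\<in>sizes c. s \<le> m"
    if "proper_colouring V E k c" for c
  proof -
    show "\<forall>s\<in>sizes c. s \<le> m" using bound that unfolding sizes_def by blast
    then show "finite (sizes c)" using finite_subset[of "sizes c" "{..m}"] by blast
    obtain S where "critical_set V E k c S" using critical_set_exists[OF \<open>finite V\<close>] .
    then show "sizes c \<noteq> {}" unfolding sizes_def by blast
  qed
  have lcs: "lcs V E k c \<le> m" "lcs V E k c = m \<longleftrightarrow> m \<in> sizes c"
    if "proper_colouring V E k c" for c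
    using sizes[OF that] Max_eq_iff[of "sizes c" m] Max_le_iff[of "sizes c" m]
    unfolding lcs_def sizes_def by auto
  define lcss where "lcss = {lcs V E k c | c. proper_colouring V E k c}"
  have lcss_bound: "\<forall>l\<in>lcss. l \<le> m" using lcs(1) unfolding lcss_def by blast
  then have "finite lcss" using finite_subset[of lcss "{..m}"] by blast
  moreover have "lcss \<noteq> {}" using assms(2) unfolding lcss_def by blast
  ultimately have "lcs_bar_k V E k = m \<longleftrightarrow> m \<in> lcss"
    unfolding lcs_bar_k_def lcss_def[symmetric] using Max_eq_iff lcss_bound by blast
  also have "\<dots> \<longleftrightarrow> (\<exists>c. proper_colouring V E k c \<and> lcs V E k c = m)"
    unfolding lcss_def by blast
  also have "\<dots> \<longleftrightarrow> (\<exists>c. proper_colouring V E k c \<and> m \<in> sizes c)"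
    using lcs(2) by blast
  finally show ?thesis
    unfolding sizes_def by fastforce
qed

lemma card_critical_set_le:
  assumes "simple_graph V E" and "V \<noteq> {}"
    and c: "proper_colouring V E (chromatic_number V E) c"
    and S: "critical_set V E (chromatic_number V E) c S"
  shows "card S \<le> card V - 1"
proof -
  obtain x0 where "x0 \<in> V" using assms(2) by blast
  then have "c x0 < chromatic_number V E" using c unfolding proper_colouring_def by blast
  then obtain x where "x \<in> V" and "\<not> recolourable V E (chromatic_number V E) c x"
    by (rule chromatic_colouring_not_recolourable[OF assms(1) c])
  then have "determining_set V E (chromatic_number V E) c (V - {x})"
    by (simp add: determining_set_Diff_singleton_iff)
  then have "S \<noteq> V" using S \<open>x \<in> V\<close> unfolding critical_set_iff_Diff_singleton by blast
  moreover have "S \<subseteq> V" using S unfolding critical_set_def determining_set_def by blast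
  moreover have "finite V" using assms(1) unfolding simple_graph_def by blast
  ultimately have "card S < card V" by (intro psubset_card_mono) auto
  then show ?thesis by linarith
qed

lemma card_eq_card_minus_one_iff:
  assumes "finite V" and "V \<noteq> {}" and "S \<subseteq> V"
  shows "card S = card V - 1 \<longleftrightarrow> (\<exists>v\<in>V. S = V - {v})"
proof
  assume "card S = card V - 1"
  then have "card (V - S) = 1"
    using assms card_Diff_subset[OF finite_subset[OF assms(3,1)] assms(3)] card_mono[OF assms(1,3)]
      card_gt_0_iff[of V] by simp
  then obtain v where "V - S = {v}" by (rule card_1_singletonE)
  then show "\<exists>v\<in>V. S = V - {v}" using assms(3) by blast
next
  assume "\<exists>v\<in>V. S = V - {v}"
  then show "card S = card V - 1" by (auto simp: card_Diff_singleton)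
qed

lemma lcs_bar_eq_card_minus_one_iff:
  assumes "simple_graph V E" and "V \<noteq> {}"
  shows "lcs_bar V E = card V - 1 \<longleftrightarrow>
    (\<exists>v\<in>V. \<exists>c. proper_colouring V E (chromatic_number V E) c
       \<and> critical_set V E (chromatic_number V E) c (V - {v}))"
proof -
  have "finite V" using assms(1) unfolding simple_graph_def by blast
  have critical_subset: "S \<subseteq> V" if "critical_set V E k c S" for k c S
    using that unfolding critical_set_def determining_set_def by blast
  have "lcs_bar V E = card V - 1 \<longleftrightarrow>
    (\<exists>c S. proper_colouring V E (chromatic_number V E) c
       \<and> critical_set V E (chromatic_number V E) c S \<and> card S = card V - 1)"
    unfolding lcs_bar_def
    using \<open>finite V\<close> proper_colouring_chromatic_number[OF assms(1)] card_critical_set_le[OF assms]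
    by (intro lcs_bar_k_eq_iff) blast+
  then show ?thesis
    using card_eq_card_minus_one_iff[OF \<open>finite V\<close> assms(2) critical_subset] by blast
qed

lemma neighbour_colours_if_not_recolourable:
  assumes "simple_graph V E" and c: "proper_colouring V E k c" and "v \<in> V"
    and "\<not> recolourable V E k c v"
  shows "c ` {u \<in> V. E v u} = {0..<k} - {c v}"
proof
  show "c ` {u \<in> V. E v u} \<subseteq> {0..<k} - {c v}"
    using c \<open>v \<in> V\<close> unfolding proper_colouring_def by fastforce
  show "{0..<k} - {c v} \<subseteq> c ` {u \<in> V. E v u}"
    using assms(4) recolourable_iff[OF assms(1-3)] by fastforce
qed

lemma degree_eq_iff_inj_on_neighbours:
  assumes "simple_graph V E" and c: "proper_colouring V E k c" and "v \<in> V"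
    and "\<not> recolourable V E k c v"
  shows "degree V E v = k - 1 \<longleftrightarrow> inj_on c {u \<in> V. E v u}"
proof -
  have "finite {u \<in> V. E v u}" using assms(1) unfolding simple_graph_def by simp
  moreover have "c v < k" using c \<open>v \<in> V\<close> unfolding proper_colouring_def by blast
  then have "card (c ` {u \<in> V. E v u}) = k - 1"
    unfolding neighbour_colours_if_not_recolourable[OF assms] by simp
  ultimately show ?thesis
    unfolding degree_def using inj_on_iff_eq_card[of "{u \<in> V. E v u}" c] by auto
qed

lemma unique_neighbour_of_colour:
  assumes graph: "simple_graph V E" and c: "proper_colouring V E k c" and "v \<in> V" "u \<in> V" "u \<noteq> v"
    and v: "\<not> recolourable V E k c v" and u: "\<not> recolourable V E k c u"
    and "\<not> determining_set V E k c (V - {v} - {u})"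
  shows "E v u \<and> (\<forall>w\<in>V. E v w \<and> c w = c u \<longrightarrow> w = u)"
proof -
  obtain c' where c': "proper_colouring V E k c'" "\<exists>x\<in>V. c' x \<noteq> c x"
    and agree: "\<forall>x\<in>V - {v} - {u}. c' x = c x"
    using assms(8) unfolding determining_set_def by blast
  have "c' v \<noteq> c v"
  proof
    assume "c' v = c v"
    have "\<forall>x\<in>V - {u}. c' x = c x"
    proof
      fix x assume "x \<in> V - {u}"
      then show "c' x = c x" using agree \<open>c' v = c v\<close> by (cases "x = v") auto
    qed
    then have "\<not> determining_set V E k c (V - {u})"
      using c' unfolding determining_set_def by blast
    then show False using u determining_set_Diff_singleton_iff[OF \<open>u \<in> V\<close>] by blast
  qed
  moreover have "c' v < k" using c' \<open>v \<in> V\<close> unfolding proper_colouring_def by blast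
  ultimately have "c' v \<in> c ` {u \<in> V. E v u}"
    unfolding neighbour_colours_if_not_recolourable[OF graph c \<open>v \<in> V\<close> v] by simp
  then obtain w where w: "w \<in> V" "E v w" "c w = c' v" by auto
  have others: "c x \<noteq> c' v" if "x \<in> V" "E v x" "x \<noteq> u" for x
  proof -
    have "x \<noteq> v" using graph that unfolding simple_graph_def by blast
    then have "c x = c' x" using agree that by simp
    then show ?thesis using c' \<open>v \<in> V\<close> that unfolding proper_colouring_def by metis
  qed
  then have "w = u" using w by blast
  then show ?thesis using w others by metis
qed

lemma critical_set_Diff_vertexD:
  assumes "v \<in> V" and "critical_set V E k c (V - {v})"
  shows "\<not> recolourable V E k c v"
    and "\<And>u. u \<in> V \<Longrightarrow> u \<noteq> v \<Longrightarrow> \<not> determining_set V E k c (V - {v} - {u})"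
proof -
  have "determining_set V E k c (V - {v})"
    using assms(2) unfolding critical_set_def by (rule conjunct1)
  then show "\<not> recolourable V E k c v"
    using determining_set_Diff_singleton_iff[OF assms(1)] by blast
  have "\<forall>u\<in>V - {v}. \<not> determining_set V E k c (V - {v} - {u})"
    using assms(2) unfolding critical_set_iff_Diff_singleton by (rule conjunct2)
  then show "\<not> determining_set V E k c (V - {v} - {u})" if "u \<in> V" "u \<noteq> v" for u
    using that by blast
qed

lemma critical_set_Diff_vertex_degree:
  assumes graph: "simple_graph V E" and c: "proper_colouring V E (chromatic_number V E) c"
    and "v \<in> V" and critical: "critical_set V E (chromatic_number V E) c (V - {v})"
  shows "degree V E v = chromatic_number V E - 1"
proof -
  let ?k = "chromatic_number V E"
  note v = critical_set_Diff_vertexD[OF \<open>v \<in> V\<close> critical]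
  have "inj_on c {u \<in> V. E v u}"
  proof (rule inj_onI)
    fix u1 u2 assume u1: "u1 \<in> {u \<in> V. E v u}" and u2: "u2 \<in> {u \<in> V. E v u}" and "c u1 = c u2"
    have "c v \<noteq> c u1" "c u1 < ?k" using c u1 \<open>v \<in> V\<close> unfolding proper_colouring_def by blast+
    then obtain x where x: "x \<in> V" "c x = c u1" "\<not> recolourable V E ?k c x"
      using chromatic_colouring_not_recolourable[OF graph c] by metis
    then have "x \<noteq> v" using \<open>c v \<noteq> c u1\<close> by blast
    then have "\<forall>w\<in>V. E v w \<and> c w = c x \<longrightarrow> w = x"
      using unique_neighbour_of_colour[OF graph c \<open>v \<in> V\<close> x(1) _ v(1) x(3) v(2)[OF x(1)]] by blast
    then show "u1 = u2" using u1 u2 x(2) \<open>c u1 = c u2\<close> by auto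
  qed
  then show ?thesis
    using degree_eq_iff_inj_on_neighbours[OF graph c \<open>v \<in> V\<close> v(1)] by blast
qed

lemma critical_set_Diff_vertex_chromatic_number:
  assumes graph: "simple_graph V E" and c: "proper_colouring V E (chromatic_number V E) c"
    and "v \<in> V" and critical: "critical_set V E (chromatic_number V E) c (V - {v})"
  shows "chromatic_number (del_vertex_V V v) (del_vertex_E E v) = chromatic_number V E - 1"
proof -
  let ?k = "chromatic_number V E"
  note v = critical_set_Diff_vertexD[OF \<open>v \<in> V\<close> critical]
  have "recolourable (del_vertex_V V v) (del_vertex_E E v) ?k c x"
    if "x \<in> del_vertex_V V v" "c x = c v" for x
  proof -
    have "x \<in> V" "x \<noteq> v" using that unfolding del_vertex_V_def by blast+
    moreover have "\<not> E v x" using c \<open>v \<in> V\<close> that(2) \<open>x \<in> V\<close> unfolding proper_colouring_def by metis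
    ultimately have "recolourable V E ?k c x"
      using unique_neighbour_of_colour[OF graph c \<open>v \<in> V\<close>] v by blast
    then show ?thesis by (rule recolourable_del_vertex)
  qed
  moreover have "c v < ?k" using c \<open>v \<in> V\<close> unfolding proper_colouring_def by blast
  ultimately obtain c' where "proper_colouring (del_vertex_V V v) (del_vertex_E E v) (?k - 1) c'"
    using proper_colouring_remove_colour[OF simple_graph_del_vertex[OF graph]
        proper_colouring_del_vertex[OF c]] by blast
  then have "chromatic_number (del_vertex_V V v) (del_vertex_E E v) \<le> ?k - 1"
    by (rule chromatic_number_le)
  then show ?thesis using chromatic_number_le_del_vertex[OF graph, of v] by linarith
qed

lemma critical_set_Diff_vertexI:
  assumes graph: "simple_graph V E" and c: "proper_colouring V E k c" and "v \<in> V"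
    and own_colour: "\<forall>x\<in>V. x \<noteq> v \<longrightarrow> c x \<noteq> c v"
    and inj: "inj_on c {u \<in> V. E v u}" and v: "\<not> recolourable V E k c v"
  shows "critical_set V E k c (V - {v})"
proof -
  have sym: "E x y \<Longrightarrow> E y x" for x y using graph unfolding simple_graph_def by blast
  have "\<not> determining_set V E k c (V - {v} - {u})" if "u \<in> V" "u \<noteq> v" for u
  proof (cases "E v u")
    case True
    let ?c' = "c(u := c v, v := c u)"
    have "proper_colouring V E k ?c'"
    proof (rule proper_colouring_swap[OF graph c \<open>u \<in> V\<close> \<open>v \<in> V\<close> sym[OF True]])
      show "\<forall>w\<in>V. E u w \<longrightarrow> w \<noteq> v \<longrightarrow> c w \<noteq> c v" using own_colour by blast
      show "\<forall>w\<in>V. E v w \<longrightarrow> w \<noteq> u \<longrightarrow> c w \<noteq> c u"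
        using inj True \<open>u \<in> V\<close> unfolding inj_on_def by blast
    qed
    moreover have "?c' u \<noteq> c u" using own_colour that by auto
    ultimately have "\<exists>c'. proper_colouring V E k c' \<and> (\<exists>x\<in>V. c' x \<noteq> c x)
        \<and> (\<forall>x\<in>V - {v} - {u}. c' x = c x)"
      using \<open>u \<in> V\<close> by (intro exI[of _ ?c'] conjI bexI[of _ u]) simp_all
    then show ?thesis unfolding determining_set_def by blast
  next
    case False
    have "c v < k" using c \<open>v \<in> V\<close> unfolding proper_colouring_def by blast
    moreover have "\<forall>w\<in>V. E u w \<longrightarrow> c w \<noteq> c v" using own_colour False sym by metis
    ultimately have "recolourable V E k c u"
      using own_colour that recolourable_iff[OF graph c \<open>u \<in> V\<close>] by metis
    then have "\<not> determining_set V E k c (V - {u})"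
      using determining_set_Diff_singleton_iff[OF \<open>u \<in> V\<close>] by blast
    then show ?thesis using determining_set_mono[of V E k c "V - {v} - {u}" "V - {u}"] by blast
  qed
  moreover have "determining_set V E k c (V - {v})"
    using v determining_set_Diff_singleton_iff[OF \<open>v \<in> V\<close>] by blast
  ultimately show ?thesis
    unfolding critical_set_iff_Diff_singleton by blast
qed

lemma critical_set_Diff_vertex_exists:
  assumes graph: "simple_graph V E" and "v \<in> V"
    and chromatic: "chromatic_number (del_vertex_V V v) (del_vertex_E E v) = chromatic_number V E - 1"
    and degree: "degree V E v = chromatic_number V E - 1"
  obtains c where "proper_colouring V E (chromatic_number V E) c"
    and "critical_set V E (chromatic_number V E) c (V - {v})"
proof -
  let ?k = "chromatic_number V E"
  have "0 < ?k" using chromatic_number_pos[OF graph] \<open>v \<in> V\<close> by blast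
  obtain d where d: "proper_colouring (del_vertex_V V v) (del_vertex_E E v) (?k - 1) d"
    using proper_colouring_chromatic_number[OF simple_graph_del_vertex[OF graph]] chromatic by metis
  define c where "c = d(v := ?k - 1)"
  have c: "proper_colouring V E ?k c"
    using proper_colouring_extend_del_vertex[OF graph d] \<open>0 < ?k\<close> unfolding c_def by simp
  have below: "c x < ?k - 1" if "x \<in> V" "x \<noteq> v" for x
    using d that unfolding c_def proper_colouring_def del_vertex_V_def by auto
  \<comment> \<open>Any recolouring of v leaves the top colour unused, saving a colour.\<close>
  have v: "\<not> recolourable V E ?k c v"
  proof
    assume "recolourable V E ?k c v"
    then obtain b where "b \<noteq> ?k - 1" "proper_colouring V E ?k (c(v := b))"
      unfolding recolourable_def c_def by auto
    then have "proper_colouring V E (?k - 1) (c(v := b))"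
      using below unfolding proper_colouring_def by auto
    then show False using chromatic_number_le \<open>0 < ?k\<close> by fastforce
  qed
  have "inj_on c {u \<in> V. E v u}"
    using degree_eq_iff_inj_on_neighbours[OF graph c \<open>v \<in> V\<close> v] degree by blast
  moreover have "\<forall>x\<in>V. x \<noteq> v \<longrightarrow> c x \<noteq> c v"
    using below unfolding c_def by fastforce
  ultimately show thesis
    using that c critical_set_Diff_vertexI[OF graph c \<open>v \<in> V\<close> _ _ v] by blast
qed

lemma critical_set_Diff_vertex_iff:
  assumes graph: "simple_graph V E" and "v \<in> V"
  shows "(\<exists>c. proper_colouring V E (chromatic_number V E) c
            \<and> critical_set V E (chromatic_number V E) c (V - {v}))
    \<longleftrightarrow> chromatic_number (del_vertex_V V v) (del_vertex_E E v) = chromatic_number V E - 1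
        \<and> degree V E v = chromatic_number V E - 1"
  using critical_set_Diff_vertex_chromatic_number[OF graph _ \<open>v \<in> V\<close>]
    critical_set_Diff_vertex_degree[OF graph _ \<open>v \<in> V\<close>]
    critical_set_Diff_vertex_exists[OF graph \<open>v \<in> V\<close>]
  by metis

theorem theorem3:
  fixes V :: "'a set" and E :: "'a \<Rightarrow> 'a \<Rightarrow> bool" and n :: nat
  assumes "simple_graph V E" and "connected_graph V E" and "card V = n"
  shows "lcs_bar V E = n - 1 \<longleftrightarrow>
    (\<exists>v\<in>V. chromatic_number (del_vertex_V V v) (del_vertex_E E v) = chromatic_number V E - 1
          \<and> chromatic_number V E - 1 = degree V E v)"
proof -
  \<comment> \<open>Connectedness is needed only to ensure that V is nonempty.\<close>
  have "V \<noteq> {}" using assms(2) unfolding connected_graph_def by blast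
  then have "lcs_bar V E = n - 1 \<longleftrightarrow>
    (\<exists>v\<in>V. \<exists>c. proper_colouring V E (chromatic_number V E) c
       \<and> critical_set V E (chromatic_number V E) c (V - {v}))"
    using lcs_bar_eq_card_minus_one_iff[OF assms(1)] assms(3) by blast
  also have "\<dots> \<longleftrightarrow> (\<exists>v\<in>V. chromatic_number (del_vertex_V V v) (del_vertex_E E v) = chromatic_number V E - 1
          \<and> chromatic_number V E - 1 = degree V E v)"
    using critical_set_Diff_vertex_iff[OF assms(1)] by (metis (no_types, lifting))
  finally show ?thesis .
qed

end
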